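(* Let $(G,\precsim)$ be a compatible quasi-ordered abelian group and $G^v=G\setminus G^o$. Then $G^v$ is a final segment of $G$. Moreover, for any $g\in G^v$ and $h\in G$ we have $cl(g+h)\leq\max(cl(g),cl(h))$, and if $h\precnsim g$ then $g\sim g+h$.
   Context: A compatible quasi-ordered abelian group is an abelian group $G$ with a total quasi-order $\precsim$ (reflexive, transitive, any two elements comparable) such that, writing $a\sim b$ for $a\precsim b\wedge b\precsim a$: $(Q_1)$ $x\sim0\Rightarrow x=0$; $(Q_2)$ $x\precsim y\wedge y\not\sim z\Rightarrow x+z\precsim y+z$, for all $x,y,z$. $cl(g)$ is the $\sim$-class of $g$; the classes are totally ordered by $cl(a)\le cl(b)\Leftrightarrow a\precsim b$. $a\precnsim b$ means $a\precsim b$ and $a\not\sim b$. An element $g$ is o-type if $cl(g)=\{g\}$ and $g$ is not of order $2$; $G^o$ is the set of o-type elements. A set $S$ is a final segment if $s\in S$, $s\precsim a$ imply $a\in S$. *)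

theory Defs
  imports Main
begin

definition qequiv :: "('a \<Rightarrow> 'a \<Rightarrow> bool) \<Rightarrow> 'a \<Rightarrow> 'a \<Rightarrow> bool" where
  "qequiv le a b \<longleftrightarrow> le a b \<and> le b a"

definition cqoag :: "('a::ab_group_add \<Rightarrow> 'a \<Rightarrow> bool) \<Rightarrow> bool" where
  "cqoag le \<longleftrightarrow>
     (\<forall>x. le x x) \<and>
     (\<forall>x y z. le x y \<longrightarrow> le y z \<longrightarrow> le x z) \<and>
     (\<forall>x y. le x y \<or> le y x) \<and>
     (\<forall>x. qequiv le x 0 \<longrightarrow> x = 0) \<and>
     (\<forall>x y z. le x y \<and> \<not> qequiv le y z \<longrightarrow> le (x + z) (y + z))"

definition qcl :: "('a \<Rightarrow> 'a \<Rightarrow> bool) \<Rightarrow> 'a \<Rightarrow> 'a set" where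
  "qcl le g = {x. qequiv le x g}"

definition otype :: "('a::ab_group_add \<Rightarrow> 'a \<Rightarrow> bool) \<Rightarrow> 'a set" where
  "otype le = {g. qcl le g = {g} \<and> \<not> (g \<noteq> 0 \<and> g + g = 0)}"

definition final_segment :: "('a \<Rightarrow> 'a \<Rightarrow> bool) \<Rightarrow> 'a set \<Rightarrow> bool" where
  "final_segment le S \<longleftrightarrow> (\<forall>s a. s \<in> S \<and> le s a \<longrightarrow> a \<in> S)"

end

theory Submission
  imports Defs
begin

text \<open>An element \<open>g\<close> lies outside \<open>G\<^sup>o\<close> iff \<open>g \<noteq> 0\<close> and \<open>g \<sim> -g\<close>: translating by \<open>-g\<close> with (Q2)
  turns any \<open>x \<sim> g\<close> into \<open>x - g \<sim> 0\<close>, so \<open>cl(g) = {g}\<close> unless \<open>g \<sim> -g\<close>. Such elements are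
  positive, while nonzero negative elements have singleton classes. All claims then follow by
  translating inequalities with (Q2); the work lies in checking each time that the translating
  element is not equivalent to the bound, which uses \<open>x \<sim> -x\<close> for every \<open>x\<close> above \<open>G\<^sup>v\<close>.\<close>

locale cqo_group =
  fixes le :: "'a::ab_group_add \<Rightarrow> 'a \<Rightarrow> bool" (infix "\<lesssim>" 50)
  assumes cqoag: "cqoag le"
begin

abbreviation qeq :: "'a \<Rightarrow> 'a \<Rightarrow> bool" (infix "\<sim>" 50) where
  "x \<sim> y \<equiv> qequiv le x y"

lemma qle_refl: "x \<lesssim> x"
  using cqoag by (simp add: cqoag_def)

lemma qle_trans: "x \<lesssim> y \<Longrightarrow> y \<lesssim> z \<Longrightarrow> x \<lesssim> z"
  using cqoag unfolding cqoag_def by blast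

lemma qle_total: "x \<lesssim> y \<or> y \<lesssim> x"
  using cqoag unfolding cqoag_def by blast

lemma qequiv_zero_eq: "x \<sim> 0 \<Longrightarrow> x = 0"
  using cqoag unfolding cqoag_def by blast

lemma qle_add_right: "x \<lesssim> y \<Longrightarrow> \<not> y \<sim> z \<Longrightarrow> x + z \<lesssim> y + z"
  using cqoag unfolding cqoag_def by blast

lemma qequiv_add_right:
  assumes "x \<sim> y" and "\<not> y \<sim> z"
  shows "x + z \<sim> y + z"
proof -
  have "\<not> x \<sim> z"
    using assms qle_trans unfolding qequiv_def by blast
  then show ?thesis
    using assms qle_add_right unfolding qequiv_def by blast
qed

lemma qequiv_eq_if_not_qequiv_uminus:
  assumes "\<not> g \<sim> -g" and "x \<sim> g"
  shows "x = g"
proof -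
  have "x + -g \<sim> g + -g"
    using qequiv_add_right assms by blast
  then show ?thesis
    using qequiv_zero_eq by force
qed

lemma uminus_qge_zero:
  assumes "x \<lesssim> 0" and "x \<noteq> 0"
  shows "0 \<lesssim> -x"
proof -
  have "\<not> 0 \<sim> -x"
    using qequiv_zero_eq assms(2) unfolding qequiv_def by force
  then show ?thesis
    using qle_add_right[OF assms(1), of "-x"] by simp
qed

lemma qequiv_uminus_imp_qge_zero:
  assumes "x \<sim> -x"
  shows "0 \<lesssim> x"
proof (rule ccontr)
  assume "\<not> 0 \<lesssim> x"
  then have "x \<lesssim> 0" and "x \<noteq> 0"
    using qle_total qle_refl by blast+
  then have "-x \<sim> 0"
    using uminus_qge_zero assms qle_trans unfolding qequiv_def by blast
  then show False
    using qequiv_zero_eq \<open>x \<noteq> 0\<close> by force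
qed

lemma notin_otype_iff: "g \<notin> otype le \<longleftrightarrow> g \<noteq> 0 \<and> g \<sim> -g"
proof
  assume g: "g \<notin> otype le"
  have "g \<in> qcl le g"
    by (simp add: qcl_def qequiv_def qle_refl)
  with g consider x where "x \<sim> g" "x \<noteq> g" | "g \<noteq> 0" "g + g = 0"
    unfolding otype_def qcl_def by blast
  then show "g \<noteq> 0 \<and> g \<sim> -g"
  proof cases
    case 1
    then show ?thesis
      using qequiv_eq_if_not_qequiv_uminus qequiv_zero_eq by blast
  next
    case 2
    then have "-g = g"
      by (metis minus_unique)
    then show ?thesis
      using 2 by (simp add: qequiv_def qle_refl)
  qed
next
  assume g: "g \<noteq> 0 \<and> g \<sim> -g"
  show "g \<notin> otype le"
  proof (cases "-g = g")
    case True
    then have "g + g = 0"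
      by (metis add.right_inverse)
    then show ?thesis
      using g by (simp add: otype_def)
  next
    case False
    have "-g \<in> qcl le g"
      using g by (simp add: qcl_def qequiv_def)
    then show ?thesis
      using False by (auto simp: otype_def)
  qed
qed

lemma qge_zero_if_notin_otype: "g \<notin> otype le \<Longrightarrow> 0 \<lesssim> g"
  using notin_otype_iff qequiv_uminus_imp_qge_zero by blast

lemma qequiv_uminus_above_order_two:
  assumes g: "0 \<lesssim> g" "g \<noteq> 0" "g + g = 0" and "\<not> a \<lesssim> g"
  shows "a \<sim> -a"
proof (rule ccontr)
  assume a: "\<not> a \<sim> -a"
  have "a \<lesssim> g + a"
    using qle_add_right[OF g(1), of a] \<open>\<not> a \<lesssim> g\<close> unfolding qequiv_def by simp
  moreover have "\<not> a + g \<sim> g"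
    using \<open>a \<lesssim> g + a\<close> \<open>\<not> a \<lesssim> g\<close> qle_trans unfolding qequiv_def by (metis add.commute)
  ultimately have "a + g \<lesssim> a + g + g"
    using qle_add_right[of a "a + g" g] by (simp add: add.commute)
  also have "a + g + g = a"
    using g(3) by (simp add: add.assoc)
  finally have "a + g \<lesssim> a" .
  then have "a + g = a"
    using qequiv_eq_if_not_qequiv_uminus[OF a] \<open>a \<lesssim> g + a\<close>
    unfolding qequiv_def by (metis add.commute)
  then show False
    using g(2) by simp
qed

lemma qequiv_uminus_above:
  assumes g: "g \<sim> -g" "g \<noteq> 0" "-g \<noteq> g" and ga: "g \<lesssim> a" "\<not> a \<lesssim> g"
  shows "a \<sim> -a"
proof (rule ccontr)
  assume a: "\<not> a \<sim> -a"
  have g_pos: "0 \<lesssim> g"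
    using qequiv_uminus_imp_qge_zero g(1) .
  \<comment> \<open>\<open>g - a\<close> is negative, so its class is a singleton, yet it contains \<open>-g - a\<close>.\<close>
  have "g + -a \<lesssim> a + -a"
    using qle_add_right[OF ga(1)] a by blast
  then have "g - a \<lesssim> 0" and "g - a \<noteq> 0"
    using ga(2) qle_refl by auto
  then have neg: "\<not> g - a \<sim> -(g - a)"
    using qequiv_uminus_imp_qge_zero qequiv_zero_eq unfolding qequiv_def by blast
  have "-a \<lesssim> 0"
    using qle_add_right[OF qle_trans[OF g_pos ga(1)], of "-a"] a by simp
  then have "\<not> g \<sim> -a"
    using g_pos g(2) qle_trans qequiv_zero_eq unfolding qequiv_def by blast
  moreover have "-g \<sim> g"
    using g(1) by (simp add: qequiv_def)
  ultimately have "-g + -a \<sim> g + -a"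
    using qequiv_add_right by blast
  then have "-g - a = g - a"
    using qequiv_eq_if_not_qequiv_uminus[OF neg] by simp
  then show False
    using g(3) by simp
qed

lemma notin_otype_if_qle:
  assumes g: "g \<notin> otype le" and "g \<lesssim> a"
  shows "a \<notin> otype le"
proof -
  have g_pos: "0 \<lesssim> g" and "g \<noteq> 0" and "g \<sim> -g"
    using g notin_otype_iff qge_zero_if_notin_otype by blast+
  have "a \<noteq> 0"
    using \<open>g \<lesssim> a\<close> g_pos \<open>g \<noteq> 0\<close> qequiv_zero_eq unfolding qequiv_def by blast
  moreover have "a \<sim> -a"
  proof (cases "a \<lesssim> g")
    case True
    then have "g \<sim> a"
      using \<open>g \<lesssim> a\<close> by (simp add: qequiv_def)
    then show ?thesis
      using qequiv_eq_if_not_qequiv_uminus \<open>g \<sim> -g\<close> by blast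
  next
    case False
    show ?thesis
    proof (cases "-g = g")
      case True
      then have "g + g = 0"
        by (metis add.right_inverse)
      then show ?thesis
        using qequiv_uminus_above_order_two g_pos \<open>g \<noteq> 0\<close> False by blast
    next
      case False
      then show ?thesis
        using qequiv_uminus_above \<open>g \<sim> -g\<close> \<open>g \<noteq> 0\<close> \<open>g \<lesssim> a\<close> \<open>\<not> a \<lesssim> g\<close> by blast
    qed
  qed
  ultimately show ?thesis
    using notin_otype_iff by blast
qed

lemma qequiv_uminus_if_qle:
  "g \<notin> otype le \<Longrightarrow> g \<lesssim> x \<Longrightarrow> x \<sim> -x"
  using notin_otype_if_qle notin_otype_iff by blast

lemma qle_of_qle_uminus:
  assumes "g \<notin> otype le" and "g \<lesssim> -h"
  shows "g \<lesssim> h"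
  using qequiv_uminus_if_qle[OF assms] assms(2) qle_trans unfolding qequiv_def by simp

lemma qequiv_add_if_qge_zero:
  assumes g: "g \<notin> otype le" and h: "0 \<lesssim> h" "\<not> g \<lesssim> h"
  shows "g \<sim> g + h"
proof -
  have "0 + g \<lesssim> h + g"
    using qle_add_right[OF h(1), of g] h(2) unfolding qequiv_def by blast
  then have gk: "g \<lesssim> g + h"
    by (simp add: add.commute)
  have "g + h \<lesssim> g"
  proof (cases "-h \<lesssim> 0")
    case True
    have "g \<noteq> 0" and "g \<sim> -g"
      using g notin_otype_iff by blast+
    then have "\<not> 0 \<sim> -g"
      using qequiv_zero_eq unfolding qequiv_def by force
    then have "-h + -g \<lesssim> 0 + -g"
      using qle_add_right[OF True] by blast
    then have "-(g + h) \<lesssim> -g"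
      by (simp add: add.commute)
    moreover have "g + h \<sim> -(g + h)"
      using qequiv_uminus_if_qle[OF g gk] .
    ultimately show ?thesis
      using \<open>g \<sim> -g\<close> qle_trans unfolding qequiv_def by blast
  next
    case False
    then have "0 \<lesssim> -h"
      using qle_total by blast
    have "\<not> -h \<sim> g + h"
      using qle_of_qle_uminus[OF g] gk h(2) qle_trans unfolding qequiv_def by blast
    then have "0 + (g + h) \<lesssim> -h + (g + h)"
      using qle_add_right[OF \<open>0 \<lesssim> -h\<close>] by blast
    then show ?thesis
      by simp
  qed
  with gk show ?thesis
    unfolding qequiv_def by blast
qed

lemma qequiv_add_if_qle_zero:
  assumes g: "g \<notin> otype le" and h: "h \<lesssim> 0"
  shows "g \<sim> g + h"
proof -
  have "g \<noteq> 0" and "g \<sim> -g" and g_pos: "0 \<lesssim> g"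
    using g notin_otype_iff qge_zero_if_notin_otype by blast+
  then have "\<not> 0 \<sim> g"
    using qequiv_zero_eq unfolding qequiv_def by blast
  then have "h + g \<lesssim> 0 + g"
    using qle_add_right[OF h] by blast
  then have kg: "g + h \<lesssim> g"
    by (simp add: add.commute)
  have "g \<lesssim> g + h"
  proof (cases "h = 0")
    case True
    then show ?thesis
      by (simp add: qle_refl)
  next
    case False
    have "\<not> g \<lesssim> h"
      using h g_pos \<open>g \<noteq> 0\<close> qle_trans qequiv_zero_eq unfolding qequiv_def by blast
    have "\<not> -h \<sim> -g"
      using qle_of_qle_uminus[OF g] \<open>\<not> g \<lesssim> h\<close> \<open>g \<sim> -g\<close> qle_trans
      unfolding qequiv_def by blast
    then have "0 + -g \<lesssim> -h + -g"
      using qle_add_right[OF uminus_qge_zero[OF h False]] by blast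
    then have "-g \<lesssim> -(g + h)"
      by (simp add: add.commute)
    moreover have "-(g + h) \<sim> g + h"
      using qequiv_uminus_if_qle[OF g] \<open>g \<sim> -g\<close> calculation qle_trans
      unfolding qequiv_def by (metis minus_minus)
    ultimately show ?thesis
      using \<open>g \<sim> -g\<close> qle_trans unfolding qequiv_def by blast
  qed
  with kg show ?thesis
    unfolding qequiv_def by blast
qed

lemma qequiv_add_if_qless:
  "g \<notin> otype le \<Longrightarrow> h \<lesssim> g \<Longrightarrow> \<not> g \<lesssim> h \<Longrightarrow> g \<sim> g + h"
  using qequiv_add_if_qge_zero qequiv_add_if_qle_zero qle_total by blast

lemma add_qle_max:
  assumes g: "g \<notin> otype le"
  shows "g + h \<lesssim> g \<or> g + h \<lesssim> h"
proof -
  consider "h \<lesssim> g" "\<not> g \<lesssim> h" | "g \<lesssim> h" "\<not> h \<lesssim> g" | "g \<sim> h"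
    using qle_total unfolding qequiv_def by blast
  then show ?thesis
  proof cases
    case 1
    then show ?thesis
      using qequiv_add_if_qless[OF g] unfolding qequiv_def by blast
  next
    case 2
    then show ?thesis
      using qequiv_add_if_qless[OF notin_otype_if_qle[OF g 2(1)]]
      unfolding qequiv_def by (metis add.commute)
  next
    case 3
    \<comment> \<open>If \<open>g + h\<close> were strictly above \<open>g \<sim> -h\<close>, adding \<open>-h\<close> would not leave its class.\<close>
    show ?thesis
    proof (rule ccontr)
      assume "\<not> ?thesis"
      then have "g \<lesssim> g + h" and k: "\<not> g + h \<lesssim> g"
        using qle_total by blast+
      have "-h \<sim> g"
        using qequiv_uminus_if_qle[OF g] 3 qle_trans unfolding qequiv_def by blast
      then have "-h \<lesssim> g + h" and "\<not> g + h \<lesssim> -h"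
        using \<open>g \<lesssim> g + h\<close> k qle_trans unfolding qequiv_def by blast+
      then have "g + h \<sim> g + h + -h"
        using qequiv_add_if_qless[OF notin_otype_if_qle[OF g \<open>g \<lesssim> g + h\<close>]] by blast
      then show False
        using k unfolding qequiv_def by simp
    qed
  qed
qed

end

theorem mainTheorem7:
  fixes le :: "'a::ab_group_add \<Rightarrow> 'a \<Rightarrow> bool"
  assumes "cqoag le"
  shows "final_segment le (UNIV - otype le)
    \<and> (\<forall>g \<in> UNIV - otype le. \<forall>h.
          (le (g + h) g \<or> le (g + h) h)
        \<and> (le h g \<and> \<not> qequiv le h g \<longrightarrow> qequiv le g (g + h)))"
proof -
  interpret cqo_group le
    using assms by unfold_locales
  have "final_segment le (UNIV - otype le)"
    unfolding final_segment_def using notin_otype_if_qle by blast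
  moreover have "qequiv le g (g + h)"
    if "g \<notin> otype le" "le h g" "\<not> qequiv le h g" for g h
    using qequiv_add_if_qless that unfolding qequiv_def by blast
  ultimately show ?thesis
    using add_qle_max by blast
qed

end
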